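(* Let $X$ be a toric Fano cone singularity given by a full-dimensional simplicial cone $\sigma\subset N_\mathbb{R}$ with primitive ray generators $v_1,\dots,v_n$ (an $\mathbb{R}$-basis of $N_\mathbb{R}$), and let $\xi$ be in the interior of $\sigma$. Then $(X,\xi)$ is K-stable if and only if $\xi$ is a positive multiple of $v_1+\dots+v_n$. In particular every toric Sasaki-Einstein structure on a rational homology sphere is quasi-regular.
   Context: For a toric cone singularity, K-stability of the polarised pair $(X,\xi)$ is equivalent to the condition that $\hat\xi=\xi/\langle u^*,\xi\rangle$ is a critical point of the volume function $w\mapsto\mathrm{Vol}(\sigma^\vee(w))$ restricted to the affine hyperplane $\{w:\langle u^*,w\rangle=1\}$, where $\sigma^\vee(w)=\{u\in\sigma^\vee:\langle u,w\rangle\le1\}$ and the canonical weight $u^*\in M_\mathbb{R}$ is defined by $\langle u^*,v_\rho\rangle=1$ for all primitive ray generators $v_\rho$ of $\sigma$. A Sasakian structure (with Reeb field $\xi$) is quasi-regular if $\xi$ is a positive real multiple of an element of $N_\mathbb{Q}$. *)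

theory Defs
  imports "HOL-Analysis.Analysis"
begin

text \<open>We identify N with the integer lattice in real^'n, N_R = real^'n, and
M_R with real^'n via the standard inner product. The ray generators are indexed
by the same finite type 'n (n generators in dimension n).\<close>

definition lattice_vec :: "real^'n \<Rightarrow> bool" where
  "lattice_vec x \<longleftrightarrow> (\<forall>i. x $ i \<in> \<int>)"

definition rational_vec :: "real^'n \<Rightarrow> bool" where
  "rational_vec x \<longleftrightarrow> (\<forall>i. x $ i \<in> \<rat>)"

definition primitive_vec :: "real^'n \<Rightarrow> bool" where
  "primitive_vec x \<longleftrightarrow> lattice_vec x \<and> x \<noteq> 0 \<and>
     \<not> (\<exists>t. 0 < t \<and> t < 1 \<and> lattice_vec (t *\<^sub>R x))"

definition tcone :: "('n \<Rightarrow> real^'n) \<Rightarrow> (real^'n) set" where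
  "tcone v = {x. \<exists>a. (\<forall>i. 0 \<le> a i) \<and> x = (\<Sum>i\<in>UNIV. a i *\<^sub>R v i)}"

definition dual_cone :: "(real^'n) set \<Rightarrow> (real^'n) set" where
  "dual_cone S = {u. \<forall>x\<in>S. 0 \<le> u \<bullet> x}"

definition trunc_dual :: "('n \<Rightarrow> real^'n) \<Rightarrow> real^'n \<Rightarrow> (real^'n) set" where
  "trunc_dual v w = {u \<in> dual_cone (tcone v). u \<bullet> w \<le> 1}"

definition vol_fun :: "('n \<Rightarrow> real^'n) \<Rightarrow> real^'n \<Rightarrow> real" where
  "vol_fun v w = measure lebesgue (trunc_dual v w)"

definition canonical_weight :: "('n \<Rightarrow> real^'n) \<Rightarrow> real^'n" where
  "canonical_weight v = (THE u. \<forall>i. u \<bullet> v i = 1)"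

definition critical_on_hyperplane ::
  "(real^'n \<Rightarrow> real) \<Rightarrow> (real^'n) set \<Rightarrow> real^'n \<Rightarrow> real^'n \<Rightarrow> bool" where
  "critical_on_hyperplane f D c w0 \<longleftrightarrow>
     (\<exists>f'. (f has_derivative f') (at w0 within (D \<inter> {w. c \<bullet> w = 1})) \<and>
           (\<forall>h. c \<bullet> h = 0 \<longrightarrow> f' h = 0))"

text \<open>K-stability of the toric polarised pair (X, xi), via the stated criterion.\<close>
definition K_stable :: "('n \<Rightarrow> real^'n) \<Rightarrow> real^'n \<Rightarrow> bool" where
  "K_stable v \<xi> \<longleftrightarrow>
     (let u = canonical_weight v in
       critical_on_hyperplane (vol_fun v) (interior (tcone v)) u ((1 / (u \<bullet> \<xi>)) *\<^sub>R \<xi>))"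

definition quasi_regular :: "real^'n \<Rightarrow> bool" where
  "quasi_regular \<xi> \<longleftrightarrow> (\<exists>c q. 0 < c \<and> rational_vec q \<and> \<xi> = c *\<^sub>R q)"

end

theory Submission
  imports Defs
begin

text \<open>
  Let \<open>du\<close> be the basis dual to the ray generators \<open>v\<close>. In the coordinates \<open>u \<bullet> v j\<close> the
  truncated dual cone \<open>trunc_dual v w\<close> is the standard simplex stretched by the factors
  \<open>1 / (du j \<bullet> w)\<close>, so \<open>vol_fun v w = K * (\<Prod>j. 1 / (du j \<bullet> w))\<close> for a constant \<open>K > 0\<close>.
  Its derivative in direction \<open>h\<close> is a nonzero multiple of \<open>\<Sum>j. (du j \<bullet> h) / (du j \<bullet> w)\<close>.
  As the canonical weight is \<open>\<Sum>j. du j\<close>, the directions tangent to the hyperplane are those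
  whose coordinates \<open>du j \<bullet> h\<close> sum to zero, and all of them are annihilated exactly when the
  weights \<open>du j \<bullet> w\<close> coincide, i.e. when \<open>w\<close> is a multiple of \<open>\<Sum>j. v j\<close>. That vector is
  integral, so the Reeb field is then quasi-regular.
\<close>

text \<open>
  \<open>measure_linear_image\<close> in \<open>Change_Of_Vars\<close> is stated for well-ordered index types only.
  For an arbitrary finite index type it suffices to know that a linear map scales Lebesgue
  measure by some constant factor.
\<close>

definition scales_lebesgue_measure :: "(real^'n \<Rightarrow> real^'n) \<Rightarrow> real \<Rightarrow> bool" where
  "scales_lebesgue_measure f k \<longleftrightarrow>
     (\<forall>S \<in> lmeasurable. f ` S \<in> lmeasurable \<and> measure lebesgue (f ` S) = k * measure lebesgue S)"

lemma scales_lebesgue_measure_boxI: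
  fixes f :: "real^'n \<Rightarrow> real^'n"
  assumes "linear f" and "\<And>a b. measure lebesgue (f ` cbox a b) = measure lebesgue (cbox a b)"
  shows "scales_lebesgue_measure f 1"
  unfolding scales_lebesgue_measure_def
proof
  fix S :: "(real^'n) set"
  assume "S \<in> lmeasurable"
  moreover have "measure lebesgue (f ` cbox a b) = 1 * measure lebesgue (cbox a b)" for a b
    using assms(2) by simp
  ultimately show "f ` S \<in> lmeasurable \<and> measure lebesgue (f ` S) = 1 * measure lebesgue S"
    using measure_linear_sufficient[OF assms(1)] by metis
qed

lemma measure_swap_image_cbox:
  fixes a b :: "real^'n"
  shows "measure lebesgue ((\<lambda>x. \<chi> i. x $ Transposition.transpose m n i) ` cbox a b)
         = measure lebesgue (cbox a b)"
proof -
  let ?\<tau> = "Transposition.transpose m n"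
  let ?h = "\<lambda>x::real^'n. \<chi> i. x $ ?\<tau> i"
  have inv: "?h (?h x) = x" for x
    by (simp add: vec_eq_iff)
  have "?h ` cbox a b = {y. ?h y \<in> cbox a b}"
  proof safe
    fix y
    assume "?h y \<in> cbox a b"
    then show "y \<in> ?h ` cbox a b"
      by (rule image_eqI[rotated]) (simp add: inv)
  qed (simp add: inv)
  also have "\<dots> = cbox (?h a) (?h b)"
  proof (intro set_eqI iffI)
    fix y
    assume "y \<in> {y. ?h y \<in> cbox a b}"
    then have "\<forall>i. a $ i \<le> y $ ?\<tau> i \<and> y $ ?\<tau> i \<le> b $ i"
      by (simp add: mem_box_cart)
    then show "y \<in> cbox (?h a) (?h b)"
      unfolding mem_box_cart by (metis vec_lambda_beta transpose_involutory)
  next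
    fix y
    assume "y \<in> cbox (?h a) (?h b)"
    then have "\<forall>i. a $ ?\<tau> i \<le> y $ i \<and> y $ i \<le> b $ ?\<tau> i"
      by (simp add: mem_box_cart)
    then show "y \<in> {y. ?h y \<in> cbox a b}"
      unfolding mem_Collect_eq mem_box_cart by (metis vec_lambda_beta transpose_involutory)
  qed
  finally have box: "?h ` cbox a b = cbox (?h a) (?h b)" .
  show ?thesis
  proof (cases "cbox a b = {}")
    case False
    with box have "cbox (?h a) (?h b) \<noteq> {}"
      by blast
    with False box show ?thesis
      using prod.permute[OF permutes_swap_id, where S=UNIV and g="\<lambda>i. (b - a) $ i"]
      by (simp add: content_cbox_cart)
  qed (simp add: box)
qed

lemma measure_shear_image_cbox:
  fixes a b :: "real^'n"
  assumes "m \<noteq> n"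
  shows "measure lebesgue ((\<lambda>x. \<chi> i. if i = m then x $ m + x $ n else x $ i) ` cbox a b)
         = measure lebesgue (cbox a b)"
proof (cases "cbox a b = {}")
  case False
  let ?h = "\<lambda>x::real^'n. \<chi> i. if i = m then x $ m + x $ n else x $ i"
  \<comment> \<open>\<open>measure_shear_interval\<close> needs \<open>0 \<le> a $ n\<close>; translate the box to achieve it.\<close>
  define t :: "real^'n" where "t = (\<chi> i. if i = n then - a $ n else 0)"
  have "?h ` cbox a b = (+) (- ?h t) ` ?h ` cbox (t + a) (t + b)"
    unfolding cbox_translation image_comp by (force simp: vec_eq_iff)
  then have "measure lebesgue (?h ` cbox a b) = measure lebesgue (?h ` cbox (t + a) (t + b))"
    by (simp only: measure_translation)
  also have "\<dots> = measure lebesgue (cbox (t + a) (t + b))"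
    using False assms by (intro measure_shear_interval) (auto simp: t_def cbox_translation)
  also have "\<dots> = measure lebesgue (cbox a b)"
    by (simp only: cbox_translation measure_translation)
  finally show ?thesis .
qed simp

lemma linear_scales_lebesgue_measure:
  fixes f :: "real^'n \<Rightarrow> real^'n"
  assumes "linear f"
  obtains k where "k \<ge> 0" and "scales_lebesgue_measure f k"
proof -
  have "\<exists>k\<ge>0. scales_lebesgue_measure f k"
  proof (rule induct_linear_elementary[OF assms])
    fix f g :: "real^'n \<Rightarrow> real^'n"
    assume "\<exists>k\<ge>0. scales_lebesgue_measure f k" "\<exists>k\<ge>0. scales_lebesgue_measure g k"
    then obtain k l where "k \<ge> 0" "scales_lebesgue_measure f k" "l \<ge> 0" "scales_lebesgue_measure g l"
      by blast
    have "scales_lebesgue_measure (f \<circ> g) (k * l)"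
      unfolding scales_lebesgue_measure_def
    proof
      fix S :: "(real^'n) set"
      assume "S \<in> lmeasurable"
      with \<open>scales_lebesgue_measure g l\<close> have gS:
        "g ` S \<in> lmeasurable" "measure lebesgue (g ` S) = l * measure lebesgue S"
        by (simp_all add: scales_lebesgue_measure_def)
      with \<open>scales_lebesgue_measure f k\<close> have
        "f ` g ` S \<in> lmeasurable" "measure lebesgue (f ` g ` S) = k * measure lebesgue (g ` S)"
        unfolding scales_lebesgue_measure_def by (blast+)
      with gS show "(f \<circ> g) ` S \<in> lmeasurable \<and>
          measure lebesgue ((f \<circ> g) ` S) = k * l * measure lebesgue S"
        unfolding image_comp[symmetric] by simp
    qed
    with \<open>k \<ge> 0\<close> \<open>l \<ge> 0\<close> show "\<exists>k\<ge>0. scales_lebesgue_measure (f \<circ> g) k"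
      by (blast intro: mult_nonneg_nonneg)
  next
    fix f :: "real^'n \<Rightarrow> real^'n" and i
    assume "linear f" "\<And>x. f x $ i = 0"
    then have "\<not> surj f"
      by (metis (full_types) one_neq_zero surjE vec_component)
    then have "\<not> inj f"
      using \<open>linear f\<close> linear_injective_imp_surjective by blast
    then have "negligible (f ` S)" for S
      using \<open>linear f\<close> negligible_linear_singular_image by blast
    then have "scales_lebesgue_measure f 0"
      by (simp add: scales_lebesgue_measure_def negligible_imp_measurable negligible_imp_measure0)
    then show "\<exists>k\<ge>0. scales_lebesgue_measure f k"
      by blast
  next
    fix c :: "'n \<Rightarrow> real"
    have "scales_lebesgue_measure (\<lambda>x. \<chi> i. c i * x $ i) \<bar>prod c UNIV\<bar>"
      by (simp add: scales_lebesgue_measure_def measurable_stretch measure_stretch)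
    then show "\<exists>k\<ge>0. scales_lebesgue_measure (\<lambda>x. \<chi> i. c i * x $ i) k"
      by (blast intro: abs_ge_zero)
  next
    fix m n :: 'n
    have "linear (\<lambda>x::real^'n. \<chi> i. x $ Transposition.transpose m n i)"
      by (rule linearI) (simp_all add: plus_vec_def scaleR_vec_def)
    then have "scales_lebesgue_measure (\<lambda>x. \<chi> i. x $ Transposition.transpose m n i) 1"
      using measure_swap_image_cbox by (rule scales_lebesgue_measure_boxI)
    then show "\<exists>k\<ge>0. scales_lebesgue_measure (\<lambda>x. \<chi> i. x $ Transposition.transpose m n i) k"
      using zero_le_one by blast
  next
    fix m n :: 'n
    assume "m \<noteq> n"
    have "linear (\<lambda>x::real^'n. \<chi> i. if i = m then x $ m + x $ n else x $ i)"
      by (rule linearI) (auto simp: plus_vec_def scaleR_vec_def vec_eq_iff algebra_simps)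
    then have "scales_lebesgue_measure (\<lambda>x. \<chi> i. if i = m then x $ m + x $ n else x $ i) 1"
      using measure_shear_image_cbox[OF \<open>m \<noteq> n\<close>] by (rule scales_lebesgue_measure_boxI)
    then show "\<exists>k\<ge>0. scales_lebesgue_measure (\<lambda>x. \<chi> i. if i = m then x $ m + x $ n else x $ i) k"
      using zero_le_one by blast
  qed
  with that show ?thesis by blast
qed

lemma injective_linear_scales_lebesgue_measure:
  fixes f :: "real^'n \<Rightarrow> real^'n"
  assumes "linear f" and "inj f"
  obtains k where "k > 0" and "scales_lebesgue_measure f k"
proof -
  obtain g where "linear g" and gf: "g \<circ> f = id"
    using linear_injective_left_inverse[OF assms] by blast
  obtain k where "k \<ge> 0" and k: "scales_lebesgue_measure f k"
    using linear_scales_lebesgue_measure[OF assms(1)] .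
  obtain l where l: "scales_lebesgue_measure g l"
    using linear_scales_lebesgue_measure[OF \<open>linear g\<close>] .
  let ?Q = "cbox 0 (One :: real^'n)"
  have "measure lebesgue ?Q = measure lebesgue (g ` f ` ?Q)"
    using gf by (simp add: image_comp)
  also have "\<dots> = l * k * measure lebesgue ?Q"
    using k l by (simp add: scales_lebesgue_measure_def)
  finally have "k \<noteq> 0"
    by auto
  with \<open>k \<ge> 0\<close> k show ?thesis
    using that[of k] by simp
qed

lemma sum_inner_Basis_cart: "(\<Sum>b\<in>Basis. x \<bullet> b) = (\<Sum>j\<in>UNIV. (x::real^'n) $ j)"
proof -
  have "inj (\<lambda>j. axis j (1::real) :: real^'n)"
    by (auto simp: inj_on_def axis_eq_axis)
  then have "(\<Sum>b\<in>range (\<lambda>j. axis j 1). x \<bullet> b) = (\<Sum>j\<in>UNIV. x $ j)"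
    by (simp add: sum.reindex cart_eq_inner_axis)
  moreover have "Basis = range (\<lambda>j. axis j (1::real) :: real^'n)"
    by (auto simp: Basis_vec_def)
  ultimately show ?thesis
    by simp
qed

lemma std_simplex_cart:
  "convex hull (insert 0 Basis) = {x::real^'n. (\<forall>j. 0 \<le> x $ j) \<and> (\<Sum>j\<in>UNIV. x $ j) \<le> 1}"
  unfolding std_simplex sum_inner_Basis_cart by (auto simp: Basis_vec_def cart_eq_inner_axis)

lemma
  shows lmeasurable_std_simplex_cart:
      "{x::real^'n. (\<forall>j. 0 \<le> x $ j) \<and> (\<Sum>j\<in>UNIV. x $ j) \<le> 1} \<in> lmeasurable"
    and measure_std_simplex_cart:
      "measure lebesgue {x::real^'n. (\<forall>j. 0 \<le> x $ j) \<and> (\<Sum>j\<in>UNIV. x $ j) \<le> 1}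
       = 1 / fact CARD('n)"
proof -
  have "compact (convex hull (insert 0 Basis :: (real^'n) set))"
    by (simp add: finite_imp_compact_convex_hull)
  then show "{x::real^'n. (\<forall>j. 0 \<le> x $ j) \<and> (\<Sum>j\<in>UNIV. x $ j) \<le> 1} \<in> lmeasurable"
    and "measure lebesgue {x::real^'n. (\<forall>j. 0 \<le> x $ j) \<and> (\<Sum>j\<in>UNIV. x $ j) \<le> 1}
       = 1 / fact CARD('n)"
    using content_std_simplex[where 'a="real^'n"]
    by (simp_all add: std_simplex_cart[symmetric] lmeasurable_compact
        compact_imp_closed borel_closed)
qed

lemma has_derivative_prod_inverse_inner:
  fixes a :: "'i \<Rightarrow> 'a::real_inner"
  assumes "finite I" and nz: "\<And>i. i \<in> I \<Longrightarrow> a i \<bullet> x \<noteq> 0"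
  shows "((\<lambda>w. \<Prod>i\<in>I. inverse (a i \<bullet> w)) has_derivative
           (\<lambda>h. - (\<Prod>i\<in>I. inverse (a i \<bullet> x)) * (\<Sum>i\<in>I. (a i \<bullet> h) / (a i \<bullet> x)))) (at x)"
proof -
  have "((\<lambda>w. \<Prod>i\<in>I. inverse (a i \<bullet> w)) has_derivative
      (\<lambda>h. \<Sum>i\<in>I. - (inverse (a i \<bullet> x) * (a i \<bullet> h) * inverse (a i \<bullet> x))
                   * (\<Prod>j\<in>I - {i}. inverse (a j \<bullet> x)))) (at x)"
    using nz by (intro has_derivative_prod Deriv.has_derivative_inverse
        bounded_linear.has_derivative[OF bounded_linear_inner_right has_derivative_ident])
  moreover have "- (inverse (a i \<bullet> x) * (a i \<bullet> h) * inverse (a i \<bullet> x)) * (\<Prod>j\<in>I - {i}. inverse (a j \<bullet> x))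
      = - (\<Prod>i\<in>I. inverse (a i \<bullet> x)) * ((a i \<bullet> h) / (a i \<bullet> x))" if "i \<in> I" for i h
    using prod.remove[OF \<open>finite I\<close> that, of "\<lambda>j. inverse (a j \<bullet> x)"]
    by (simp add: divide_inverse ac_simps)
  ultimately show ?thesis
    by (simp add: sum_distrib_left cong: sum.cong)
qed

lemma has_derivative_within_unique_along_line:
  fixes f :: "'a::real_normed_vector \<Rightarrow> 'b::real_normed_vector"
  assumes f': "(f has_derivative f') (at x within S)" and f'': "(f has_derivative f'') (at x within S)"
    and "r > 0" and line: "\<And>t. \<bar>t\<bar> < r \<Longrightarrow> x + t *\<^sub>R h \<in> S"
  shows "f' h = f'' h"
proof -
  let ?\<phi> = "\<lambda>t::real. x + t *\<^sub>R h"
  have \<phi>: "(?\<phi> has_derivative (\<lambda>t. t *\<^sub>R h)) (at 0 within ball 0 r)"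
    by (auto intro!: derivative_eq_intros)
  have at: "at (0::real) within ball 0 r = at 0"
    using \<open>r > 0\<close> by (intro at_within_open) auto
  have sub: "?\<phi> ` ball 0 r \<subseteq> S"
    using line by auto
  have "((\<lambda>t. f (?\<phi> t)) has_derivative (\<lambda>t. d (t *\<^sub>R h))) (at 0)"
    if "(f has_derivative d) (at x within S)" for d
  proof -
    have "(f has_derivative d) (at (?\<phi> 0) within ?\<phi> ` ball 0 r)"
      using has_derivative_subset[OF that sub] by simp
    from has_derivative_in_compose[OF \<phi> this] show ?thesis
      unfolding at .
  qed
  then have "(\<lambda>t. f' (t *\<^sub>R h)) = (\<lambda>t. f'' (t *\<^sub>R h))"
    using f' f'' by (blast intro: has_derivative_unique)
  then show ?thesis
    by (metis scaleR_one)
qed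

lemma critical_on_hyperplane_iff:
  fixes f g :: "real^'n \<Rightarrow> real"
  assumes "open D" and "w0 \<in> D" and "c \<bullet> w0 = 1"
    and g: "(g has_derivative g') (at w0)" and "\<And>w. w \<in> D \<Longrightarrow> f w = g w"
  shows "critical_on_hyperplane f D c w0 \<longleftrightarrow> (\<forall>h. c \<bullet> h = 0 \<longrightarrow> g' h = 0)"
proof -
  let ?S = "D \<inter> {w. c \<bullet> w = 1}"
  have f: "(f has_derivative g') (at w0 within ?S)"
    using has_derivative_at_withinI[OF g] zero_less_one
    by (rule has_derivative_transform_within) (use assms in auto)
  obtain e where "e > 0" and e: "ball w0 e \<subseteq> D"
    using \<open>open D\<close> \<open>w0 \<in> D\<close> open_contains_ball by blast
  have unique: "f' h = g' h" if "(f has_derivative f') (at w0 within ?S)" and "c \<bullet> h = 0" for f' h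
  proof (rule has_derivative_within_unique_along_line[OF that(1) f])
    show "e / (norm h + 1) > 0"
      using \<open>e > 0\<close> by (simp add: add_nonneg_pos)
    fix t
    assume "\<bar>t\<bar> < e / (norm h + 1)"
    have "norm (t *\<^sub>R h) \<le> \<bar>t\<bar> * (norm h + 1)"
      by (simp add: mult_left_mono)
    also have "\<dots> < e"
      using \<open>\<bar>t\<bar> < e / (norm h + 1)\<close> by (simp add: pos_less_divide_eq add_nonneg_pos)
    finally have "norm (t *\<^sub>R h) < e" .
    then show "w0 + t *\<^sub>R h \<in> ?S"
      using e \<open>c \<bullet> w0 = 1\<close> \<open>c \<bullet> h = 0\<close> by (auto simp: dist_norm inner_add_right)
  qed
  show ?thesis
  proof
    assume "critical_on_hyperplane f D c w0"
    then obtain f' where "(f has_derivative f') (at w0 within ?S)" and "\<forall>h. c \<bullet> h = 0 \<longrightarrow> f' h = 0"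
      unfolding critical_on_hyperplane_def by blast
    with unique show "\<forall>h. c \<bullet> h = 0 \<longrightarrow> g' h = 0"
      by metis
  next
    assume "\<forall>h. c \<bullet> h = 0 \<longrightarrow> g' h = 0"
    with f show "critical_on_hyperplane f D c w0"
      unfolding critical_on_hyperplane_def by blast
  qed
qed

lemma sum_divide_vanishes_on_zero_sum_iff:
  fixes t :: "'i \<Rightarrow> real"
  assumes "finite I" and nz: "\<And>i. i \<in> I \<Longrightarrow> t i \<noteq> 0"
  shows "(\<forall>y. sum y I = 0 \<longrightarrow> (\<Sum>i\<in>I. y i / t i) = 0) \<longleftrightarrow> (\<forall>i\<in>I. \<forall>j\<in>I. t i = t j)"
proof
  assume H: "\<forall>y. sum y I = 0 \<longrightarrow> (\<Sum>i\<in>I. y i / t i) = 0"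
  show "\<forall>i\<in>I. \<forall>j\<in>I. t i = t j"
  proof (intro ballI)
    fix i j
    assume "i \<in> I" "j \<in> I"
    let ?y = "\<lambda>k. (if k = i then 1 else 0) - (if k = j then 1 else 0) :: real"
    have "sum ?y I = 0"
      using \<open>finite I\<close> \<open>i \<in> I\<close> \<open>j \<in> I\<close> by (simp add: sum_subtractf)
    with H have "(\<Sum>k\<in>I. ?y k / t k) = 0"
      by blast
    moreover have "(\<Sum>k\<in>I. ?y k / t k)
        = (\<Sum>k\<in>I. (if k = i then 1 / t i else 0) - (if k = j then 1 / t j else 0))"
      by (rule sum.cong) (auto simp: diff_divide_distrib)
    ultimately have "1 / t i - 1 / t j = 0"
      using \<open>finite I\<close> \<open>i \<in> I\<close> \<open>j \<in> I\<close> by (simp add: sum_subtractf)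
    then show "t i = t j"
      using nz \<open>i \<in> I\<close> \<open>j \<in> I\<close> by (simp add: field_simps)
  qed
next
  assume const: "\<forall>i\<in>I. \<forall>j\<in>I. t i = t j"
  show "\<forall>y. sum y I = 0 \<longrightarrow> (\<Sum>i\<in>I. y i / t i) = 0"
  proof (intro allI impI)
    fix y :: "'i \<Rightarrow> real"
    assume "sum y I = 0"
    show "(\<Sum>i\<in>I. y i / t i) = 0"
    proof (cases "I = {}")
      case False
      then obtain i0 where "i0 \<in> I"
        by blast
      have "(\<Sum>i\<in>I. y i / t i) = (\<Sum>i\<in>I. y i / t i0)"
      proof (rule sum.cong)
        fix i
        assume "i \<in> I"
        with const \<open>i0 \<in> I\<close> have "t i = t i0"
          by blast
        then show "y i / t i = y i / t i0"
          by simp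
      qed simp
      then have "(\<Sum>i\<in>I. y i / t i) = sum y I / t i0"
        by (simp add: sum_divide_distrib)
      with \<open>sum y I = 0\<close> show ?thesis
        by simp
    qed simp
  qed
qed

lemma matrix_vector_mult_transpose_rows:
  fixes v :: "'n::finite \<Rightarrow> real^'m"
  shows "transpose (\<chi> i. v i) *v a = (\<Sum>j\<in>UNIV. a $ j *\<^sub>R v j)"
  by (simp add: vec_eq_iff matrix_vector_mult_def transpose_def mult.commute)

lemma dual_basis_exists:
  fixes v :: "'n::finite \<Rightarrow> real^'n"
  assumes indep: "\<And>a. (\<Sum>i\<in>UNIV. a i *\<^sub>R v i) = 0 \<Longrightarrow> (\<forall>i. a i = 0)"
  obtains du where "\<And>i j. v i \<bullet> du j = (if i = j then 1 else 0)"
    and "\<And>w. w = (\<Sum>j\<in>UNIV. (du j \<bullet> w) *\<^sub>R v j)"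
proof -
  define T where "T = transpose (\<chi> i. v i)"
  have "inj ((*v) T)"
    unfolding linear_injective_0[OF matrix_vector_mul_linear]
  proof (intro allI impI)
    fix x
    assume "T *v x = 0"
    then have "(\<Sum>j\<in>UNIV. x $ j *\<^sub>R v j) = 0"
      by (simp only: T_def matrix_vector_mult_transpose_rows)
    with indep show "x = 0"
      by (simp add: vec_eq_iff)
  qed
  then obtain C where C: "C ** T = mat 1"
    using matrix_left_invertible_injective by blast
  then have "T ** C = mat 1"
    using matrix_left_right_inverse by blast
  define du where "du j = row j C" for j
  have "v i \<bullet> du j = (C ** T) $ j $ i" for i j
    by (simp add: matrix_matrix_mult_def T_def transpose_def row_def inner_vec_def du_def mult.commute)
  then have "v i \<bullet> du j = (if i = j then 1 else 0)" for i j
    using C by (simp add: mat_def)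
  moreover have "w = (\<Sum>j\<in>UNIV. (du j \<bullet> w) *\<^sub>R v j)" for w
  proof -
    have "w = T *v (C *v w)"
      using \<open>T ** C = mat 1\<close> by (simp add: matrix_vector_mul_assoc)
    moreover have "(C *v w) $ j = du j \<bullet> w" for j
      by (simp add: du_def matrix_vector_mult_def row_def inner_vec_def)
    ultimately show ?thesis
      by (simp only: T_def matrix_vector_mult_transpose_rows)
  qed
  ultimately show ?thesis
    using that by blast
qed

locale dual_bases =
  fixes v du :: "'n::finite \<Rightarrow> real^'n"
  assumes inner_dual: "\<And>i j. v i \<bullet> du j = (if i = j then 1 else 0)"
    and expand: "\<And>w. w = (\<Sum>j\<in>UNIV. (du j \<bullet> w) *\<^sub>R v j)"
begin

lemma inner_dual': "du j \<bullet> v i = (if i = j then 1 else 0)"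
  using inner_dual[of i j] by (simp add: inner_commute)

lemma inner_sum_coordinates: "du k \<bullet> (\<Sum>j\<in>UNIV. a j *\<^sub>R v j) = a k"
  by (simp add: inner_sum_right inner_dual' if_distrib cong: if_cong)

lemma inner_expand: "u \<bullet> w = (\<Sum>j\<in>UNIV. (du j \<bullet> w) * (u \<bullet> v j))"
  by (subst (2) expand) (simp add: inner_sum_right)

lemma expand_dual: "u = (\<Sum>j\<in>UNIV. (u \<bullet> v j) *\<^sub>R du j)"
proof -
  let ?r = "u - (\<Sum>j\<in>UNIV. (u \<bullet> v j) *\<^sub>R du j)"
  have "?r \<bullet> v i = 0" for i
    by (simp add: inner_diff_left inner_sum_left inner_dual' if_distrib cong: if_cong)
  then have "?r \<bullet> ?r = 0"
    using inner_expand[of ?r ?r] by simp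
  then show ?thesis
    by simp
qed

lemma canonical_weight_eq: "canonical_weight v = (\<Sum>j\<in>UNIV. du j)"
  unfolding canonical_weight_def
proof (rule the_equality)
  show "\<forall>i. (\<Sum>j\<in>UNIV. du j) \<bullet> v i = 1"
    by (simp add: inner_sum_left inner_dual')
  show "u = (\<Sum>j\<in>UNIV. du j)" if "\<forall>i. u \<bullet> v i = 1" for u
    using expand_dual[of u] that by simp
qed

lemma inner_canonical_weight: "canonical_weight v \<bullet> w = (\<Sum>j\<in>UNIV. du j \<bullet> w)"
  by (simp add: canonical_weight_eq inner_sum_left)

lemma tcone_eq: "tcone v = {w. \<forall>j. 0 \<le> du j \<bullet> w}"
proof (intro set_eqI iffI)
  fix w
  assume "w \<in> tcone v"
  then obtain a where "\<forall>i. 0 \<le> a i" and "w = (\<Sum>i\<in>UNIV. a i *\<^sub>R v i)"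
    unfolding tcone_def by blast
  then show "w \<in> {w. \<forall>j. 0 \<le> du j \<bullet> w}"
    by (simp add: inner_sum_coordinates)
next
  fix w
  assume "w \<in> {w. \<forall>j. 0 \<le> du j \<bullet> w}"
  then show "w \<in> tcone v"
    unfolding tcone_def using expand[of w] by (intro CollectI exI[of _ "\<lambda>j. du j \<bullet> w"]) simp
qed

lemma interior_tcone_eq: "interior (tcone v) = {w. \<forall>j. 0 < du j \<bullet> w}"
proof
  have "open {w. \<forall>j. 0 < du j \<bullet> w}"
    by (simp add: Collect_all_eq open_INT open_halfspace_gt)
  then show "{w. \<forall>j. 0 < du j \<bullet> w} \<subseteq> interior (tcone v)"
    by (rule interior_maximal[rotated]) (auto simp: tcone_eq less_imp_le)
next
  show "interior (tcone v) \<subseteq> {w. \<forall>j. 0 < du j \<bullet> w}"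
  proof safe
    fix w j
    assume "w \<in> interior (tcone v)"
    then obtain e where "e > 0" and "ball w e \<subseteq> tcone v"
      using mem_interior by blast
    define t where "t = e / (2 * norm (v j))"
    have "v j \<noteq> 0"
      using inner_dual[of j j] by auto
    then have "t > 0" and "w - t *\<^sub>R v j \<in> ball w e"
      using \<open>e > 0\<close> by (simp_all add: t_def dist_norm)
    with \<open>ball w e \<subseteq> tcone v\<close> have "0 \<le> du j \<bullet> (w - t *\<^sub>R v j)"
      unfolding tcone_eq by blast
    with \<open>t > 0\<close> show "0 < du j \<bullet> w"
      by (simp add: inner_diff_right inner_dual')
  qed
qed

lemma trunc_dual_eq: "trunc_dual v w = {u. (\<forall>i. 0 \<le> u \<bullet> v i) \<and> u \<bullet> w \<le> 1}"
proof -
  have "dual_cone (tcone v) = {u. \<forall>i. 0 \<le> u \<bullet> v i}"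
  proof (intro set_eqI iffI)
    fix u
    assume "u \<in> dual_cone (tcone v)"
    moreover have "v i \<in> tcone v" for i
      by (simp add: tcone_eq inner_dual')
    ultimately show "u \<in> {u. \<forall>i. 0 \<le> u \<bullet> v i}"
      by (simp add: dual_cone_def)
  next
    fix u
    assume "u \<in> {u. \<forall>i. 0 \<le> u \<bullet> v i}"
    then show "u \<in> dual_cone (tcone v)"
      by (auto simp: dual_cone_def tcone_def inner_sum_right intro!: sum_nonneg)
  qed
  then show ?thesis
    by (simp add: trunc_dual_def)
qed

lemma zero_sum_coordinates_iff:
  "(\<forall>h. canonical_weight v \<bullet> h = 0 \<longrightarrow> P (\<lambda>i. du i \<bullet> h)) \<longleftrightarrow> (\<forall>y. sum y UNIV = 0 \<longrightarrow> P y)"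
proof
  assume H: "\<forall>h. canonical_weight v \<bullet> h = 0 \<longrightarrow> P (\<lambda>i. du i \<bullet> h)"
  show "\<forall>y. sum y UNIV = 0 \<longrightarrow> P y"
  proof (intro allI impI)
    fix y :: "'n \<Rightarrow> real"
    assume "sum y UNIV = 0"
    then have "canonical_weight v \<bullet> (\<Sum>j\<in>UNIV. y j *\<^sub>R v j) = 0"
      by (simp add: inner_canonical_weight inner_sum_coordinates)
    with H have "P (\<lambda>i. du i \<bullet> (\<Sum>j\<in>UNIV. y j *\<^sub>R v j))"
      by blast
    then show "P y"
      by (simp add: inner_sum_coordinates)
  qed
next
  assume H: "\<forall>y. sum y UNIV = 0 \<longrightarrow> P y"
  show "\<forall>h. canonical_weight v \<bullet> h = 0 \<longrightarrow> P (\<lambda>i. du i \<bullet> h)"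
    using H[rule_format, of "\<lambda>i. du i \<bullet> _"] by (simp add: inner_canonical_weight)
qed

lemma vol_fun_eq:
  obtains K where "K > 0"
    and "\<And>w. w \<in> interior (tcone v) \<Longrightarrow> vol_fun v w = K * (\<Prod>j\<in>UNIV. inverse (du j \<bullet> w))"
proof -
  define B where "B = (*v) (transpose (\<chi> j. du j))"
  define Std :: "(real^'n) set" where "Std = {x. (\<forall>j. 0 \<le> x $ j) \<and> (\<Sum>j\<in>UNIV. x $ j) \<le> 1}"
  have B_eq: "B x = (\<Sum>j\<in>UNIV. x $ j *\<^sub>R du j)" for x
    by (simp only: B_def matrix_vector_mult_transpose_rows)
  have B_inner: "B x \<bullet> v i = x $ i" for x i
    by (simp add: B_eq inner_sum_left inner_dual' if_distrib cong: if_cong)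
  have "inj B"
  proof (rule injI)
    fix x y
    assume "B x = B y"
    then have "B x \<bullet> v i = B y \<bullet> v i" for i
      by simp
    then show "x = y"
      by (simp add: B_inner vec_eq_iff)
  qed
  moreover have "linear B"
    by (simp add: B_def)
  ultimately obtain k where "k > 0" and k: "scales_lebesgue_measure B k"
    using injective_linear_scales_lebesgue_measure by blast
  have Std: "Std \<in> lmeasurable" "measure lebesgue Std = 1 / fact CARD('n)"
    unfolding Std_def by (rule lmeasurable_std_simplex_cart, rule measure_std_simplex_cart)
  define K where "K = k * measure lebesgue Std"
  have "K > 0"
    using \<open>k > 0\<close> by (simp add: K_def Std)
  moreover have "vol_fun v w = K * (\<Prod>j\<in>UNIV. inverse (du j \<bullet> w))"
    if "w \<in> interior (tcone v)" for w
  proof -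
    have t: "0 < du j \<bullet> w" for j
      using that by (simp add: interior_tcone_eq)
    then have t_nz: "du j \<bullet> w \<noteq> 0" for j
      by (simp add: less_imp_neq[symmetric])
    define st where "st = (\<lambda>x::real^'n. \<chi> j. inverse (du j \<bullet> w) * x $ j)"
    have "trunc_dual v w = B ` st ` Std"
    proof (intro equalityI subsetI)
      fix u
      assume "u \<in> trunc_dual v w"
      then have u: "\<forall>i. 0 \<le> u \<bullet> v i" "u \<bullet> w \<le> 1"
        by (auto simp: trunc_dual_eq)
      let ?x = "\<chi> j. (du j \<bullet> w) * (u \<bullet> v j)"
      have "st ?x = (\<chi> j. u \<bullet> v j)"
        using t_nz by (simp add: st_def vec_eq_iff)
      then have Bx: "B (st ?x) = u"
        by (simp add: B_eq expand_dual[of u, symmetric])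
      have "?x \<in> Std"
      proof -
        have "0 \<le> (du j \<bullet> w) * (u \<bullet> v j)" for j
          using t[of j] u(1) by (intro mult_nonneg_nonneg) auto
        with u(2) show ?thesis
          by (simp add: Std_def inner_expand[of u w])
      qed
      then have "st ?x \<in> st ` Std"
        by (rule imageI)
      with Bx show "u \<in> B ` st ` Std"
        by (rule image_eqI[OF sym])
    next
      fix u
      assume "u \<in> B ` st ` Std"
      then obtain x where x: "x \<in> Std" and "u = B (st x)"
        by blast
      then have uv: "u \<bullet> v i = inverse (du i \<bullet> w) * x $ i" for i
        by (simp add: B_inner st_def)
      then have "u \<bullet> w = (\<Sum>j\<in>UNIV. x $ j)"
        using inner_expand[of u w] t_nz by (simp add: mult.assoc[symmetric])
      with x uv t show "u \<in> trunc_dual v w"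
        by (simp add: trunc_dual_eq Std_def less_imp_le)
    qed
    moreover have "st ` Std \<in> lmeasurable"
      and "measure lebesgue (st ` Std) = \<bar>\<Prod>j\<in>UNIV. inverse (du j \<bullet> w)\<bar> * measure lebesgue Std"
      unfolding st_def using Std(1) by (rule measurable_stretch, rule measure_stretch)
    moreover have "\<bar>\<Prod>j\<in>UNIV. inverse (du j \<bullet> w)\<bar> = (\<Prod>j\<in>UNIV. inverse (du j \<bullet> w))"
      using t by (simp add: prod_pos less_imp_le)
    ultimately show ?thesis
      using k by (simp add: vol_fun_def scales_lebesgue_measure_def K_def)
  qed
  ultimately show ?thesis
    using that by blast
qed

lemma critical_vol_fun_iff:
  assumes "w0 \<in> interior (tcone v)" and "canonical_weight v \<bullet> w0 = 1"
  shows "critical_on_hyperplane (vol_fun v) (interior (tcone v)) (canonical_weight v) w0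
         \<longleftrightarrow> (\<forall>i j. du i \<bullet> w0 = du j \<bullet> w0)"
proof -
  obtain K where "K > 0"
    and vol: "\<And>w. w \<in> interior (tcone v) \<Longrightarrow> vol_fun v w = K * (\<Prod>j\<in>UNIV. inverse (du j \<bullet> w))"
    using vol_fun_eq by blast
  let ?P = "\<Prod>j\<in>UNIV. inverse (du j \<bullet> w0)"
  have t: "0 < du j \<bullet> w0" for j
    using assms(1) by (simp add: interior_tcone_eq)
  then have "?P > 0" and t_nz: "du j \<bullet> w0 \<noteq> 0" for j
    by (simp_all add: prod_pos less_imp_neq[symmetric])
  have "((\<lambda>w. K * (\<Prod>j\<in>UNIV. inverse (du j \<bullet> w))) has_derivative
      (\<lambda>h. K * (- ?P * (\<Sum>i\<in>UNIV. (du i \<bullet> h) / (du i \<bullet> w0))))) (at w0)"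
    using t_nz by (intro has_derivative_mult_right has_derivative_prod_inverse_inner) auto
  from critical_on_hyperplane_iff[OF open_interior assms this vol]
  have "critical_on_hyperplane (vol_fun v) (interior (tcone v)) (canonical_weight v) w0
      \<longleftrightarrow> (\<forall>h. canonical_weight v \<bullet> h = 0 \<longrightarrow> K * (- ?P * (\<Sum>i\<in>UNIV. (du i \<bullet> h) / (du i \<bullet> w0))) = 0)" .
  also have "\<dots> \<longleftrightarrow> (\<forall>h. canonical_weight v \<bullet> h = 0 \<longrightarrow> (\<Sum>i\<in>UNIV. (du i \<bullet> h) / (du i \<bullet> w0)) = 0)"
    using \<open>K > 0\<close> \<open>?P > 0\<close> t_nz by simp
  also have "\<dots> \<longleftrightarrow> (\<forall>y. sum y UNIV = 0 \<longrightarrow> (\<Sum>i\<in>UNIV. y i / (du i \<bullet> w0)) = 0)"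
    by (rule zero_sum_coordinates_iff)
  also have "\<dots> \<longleftrightarrow> (\<forall>i j. du i \<bullet> w0 = du j \<bullet> w0)"
    using t_nz by (simp add: sum_divide_vanishes_on_zero_sum_iff)
  finally show ?thesis .
qed

lemma K_stable_iff:
  assumes "\<xi> \<in> interior (tcone v)"
  shows "K_stable v \<xi> \<longleftrightarrow> (\<forall>i j. du i \<bullet> \<xi> = du j \<bullet> \<xi>)"
proof -
  define s where "s = canonical_weight v \<bullet> \<xi>"
  define w0 where "w0 = (1 / s) *\<^sub>R \<xi>"
  have pos: "0 < du j \<bullet> \<xi>" for j
    using assms by (simp add: interior_tcone_eq)
  then have "s > 0"
    unfolding s_def inner_canonical_weight by (simp add: sum_pos)
  with pos have "w0 \<in> interior (tcone v)" and "canonical_weight v \<bullet> w0 = 1"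
    by (simp_all add: w0_def interior_tcone_eq s_def[symmetric])
  have "K_stable v \<xi> \<longleftrightarrow>
      critical_on_hyperplane (vol_fun v) (interior (tcone v)) (canonical_weight v) w0"
    by (simp add: K_stable_def Let_def w0_def s_def)
  also have "\<dots> \<longleftrightarrow> (\<forall>i j. du i \<bullet> w0 = du j \<bullet> w0)"
    by (rule critical_vol_fun_iff) fact+
  also have "\<dots> \<longleftrightarrow> (\<forall>i j. du i \<bullet> \<xi> = du j \<bullet> \<xi>)"
    using \<open>s > 0\<close> by (simp add: w0_def)
  finally show ?thesis .
qed

lemma eq_scaleR_sum_iff:
  assumes "\<xi> \<in> interior (tcone v)"
  shows "(\<exists>c>0. \<xi> = c *\<^sub>R (\<Sum>i\<in>UNIV. v i)) \<longleftrightarrow> (\<forall>i j. du i \<bullet> \<xi> = du j \<bullet> \<xi>)"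
proof
  assume "\<exists>c>0. \<xi> = c *\<^sub>R (\<Sum>i\<in>UNIV. v i)"
  then obtain c where "\<xi> = (\<Sum>i\<in>UNIV. c *\<^sub>R v i)"
    by (auto simp: scaleR_sum_right)
  then have "du i \<bullet> \<xi> = c" for i
    by (simp add: inner_sum_coordinates)
  then show "\<forall>i j. du i \<bullet> \<xi> = du j \<bullet> \<xi>"
    by simp
next
  fix k :: 'n
  assume "\<forall>i j. du i \<bullet> \<xi> = du j \<bullet> \<xi>"
  then have eq: "(du j \<bullet> \<xi>) *\<^sub>R v j = (du k \<bullet> \<xi>) *\<^sub>R v j" for j
    by metis
  have "\<xi> = (\<Sum>j\<in>UNIV. (du j \<bullet> \<xi>) *\<^sub>R v j)"
    by (rule expand)
  also have "\<dots> = (\<Sum>j\<in>UNIV. (du k \<bullet> \<xi>) *\<^sub>R v j)"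
    by (intro sum.cong refl eq)
  finally have "\<xi> = (\<Sum>j\<in>UNIV. (du k \<bullet> \<xi>) *\<^sub>R v j)" .
  moreover have "du k \<bullet> \<xi> > 0"
    using assms by (simp add: interior_tcone_eq)
  ultimately show "\<exists>c>0. \<xi> = c *\<^sub>R (\<Sum>i\<in>UNIV. v i)"
    by (auto simp: scaleR_sum_right)
qed

end

lemma rational_vec_sum_lattice:
  assumes "\<And>i. i \<in> I \<Longrightarrow> lattice_vec (x i)"
  shows "rational_vec (\<Sum>i\<in>I. x i)"
  unfolding rational_vec_def
proof
  fix k
  have "(\<Sum>i\<in>I. x i $ k) \<in> \<int>"
    using assms by (intro Ints_sum) (simp add: lattice_vec_def)
  then show "(\<Sum>i\<in>I. x i) $ k \<in> \<rat>"
    using Ints_subset_Rats by auto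
qed

theorem mainTheorem5:
  fixes v :: "'n \<Rightarrow> real^'n" and \<xi> :: "real^'n"
  assumes indep: "\<And>a. (\<Sum>i\<in>UNIV. a i *\<^sub>R v i) = 0 \<Longrightarrow> (\<forall>i. a i = 0)"
    and prim: "\<And>i. primitive_vec (v i)"
    and xi: "\<xi> \<in> interior (tcone v)"
  shows "(K_stable v \<xi> \<longleftrightarrow> (\<exists>c>0. \<xi> = c *\<^sub>R (\<Sum>i\<in>UNIV. v i)))
         \<and> (K_stable v \<xi> \<longrightarrow> quasi_regular \<xi>)"
proof -
  obtain du where "\<And>i j. v i \<bullet> du j = (if i = j then 1 else 0)"
    and "\<And>w. w = (\<Sum>j\<in>UNIV. (du j \<bullet> w) *\<^sub>R v j)"
    using dual_basis_exists[OF indep] by blast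
  then interpret dual_bases v du
    by unfold_locales
  have stable: "K_stable v \<xi> \<longleftrightarrow> (\<exists>c>0. \<xi> = c *\<^sub>R (\<Sum>i\<in>UNIV. v i))"
    using K_stable_iff[OF xi] eq_scaleR_sum_iff[OF xi] by simp
  have "rational_vec (\<Sum>i\<in>UNIV. v i)"
    using prim by (intro rational_vec_sum_lattice) (simp add: primitive_vec_def)
  then have "K_stable v \<xi> \<longrightarrow> quasi_regular \<xi>"
    using stable by (auto simp: quasi_regular_def)
  with stable show ?thesis
    by blast
qed

end
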